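(* Let $\phi(x,y)=\lambda(x,y)\alpha(x,y)-\beta(x,y)$ be the Riley polynomial of $K_2=K(17,7)$ (the case $l=2$). Then for every $n\geq 5$, $\phi(2\cos(\pi/n),y)$ has a real root $y_n>2$.
   Context: $\lambda(x,y)=9x^2-12x^4+4x^6-5y+10x^2y+2x^4y-4x^6y-11x^2y^2+8x^4y^2+x^6y^2+5y^3-4x^2y^3-3x^4y^3+3x^2y^4-y^5$, $\alpha(x,y)=1-4x^2+2x^4+2y-x^2y-x^4y-y^2+2x^2y^2-y^3$, $\beta(x,y)=-1+x^2-y$. $K(p,q)$ is the two-bridge knot with fraction $p/q$. *)

theory Defs
  imports Complex_Main
begin

definition lam :: "real \<Rightarrow> real \<Rightarrow> real" where
  "lam x y = 9*x^2 - 12*x^4 + 4*x^6 - 5*y + 10*x^2*y + 2*x^4*y - 4*x^6*y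
     - 11*x^2*y^2 + 8*x^4*y^2 + x^6*y^2 + 5*y^3 - 4*x^2*y^3 - 3*x^4*y^3
     + 3*x^2*y^4 - y^5"

definition alpha :: "real \<Rightarrow> real \<Rightarrow> real" where
  "alpha x y = 1 - 4*x^2 + 2*x^4 + 2*y - x^2*y - x^4*y - y^2 + 2*x^2*y^2 - y^3"

definition beta :: "real \<Rightarrow> real \<Rightarrow> real" where
  "beta x y = -1 + x^2 - y"

definition riley_phi :: "real \<Rightarrow> real \<Rightarrow> real" where
  "riley_phi x y = lam x y * alpha x y - beta x y"

end

theory Submission
  imports Defs "HOL-Analysis.Complex_Transcendental"
begin

text \<open>
  The Riley polynomial only involves even powers of \<open>x\<close>, so put \<open>t = x\<^sup>2\<close>; for \<open>n \<ge> 5\<close>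
  the point \<open>t = 4 cos\<^sup>2(\<pi>/n)\<close> lies in \<open>[64/25, 4]\<close>. On that range \<open>\<phi>\<close> is negative at
  \<open>y = 2\<close> (for \<open>t \<le> 37/10\<close>) or at \<open>y = 5/2\<close> (for \<open>t \<ge> 37/10\<close>), and positive at \<open>y = 4\<close>:
  expanded in \<open>s = 4 - t\<close>, \<open>\<phi>(t, 4)\<close> has only positive coefficients. The intermediate value
  theorem then gives a root \<open>y > 2\<close>.
\<close>

definition riley_phi_sq :: "real \<Rightarrow> real \<Rightarrow> real" where
  "riley_phi_sq t y = (9*t - 12*t^2 + 4*t^3 - 5*y + 10*t*y + 2*t^2*y - 4*t^3*y
     - 11*t*y^2 + 8*t^2*y^2 + t^3*y^2 + 5*y^3 - 4*t*y^3 - 3*t^2*y^3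
     + 3*t*y^4 - y^5) * (1 - 4*t + 2*t^2 + 2*y - t*y - t^2*y - y^2 + 2*t*y^2 - y^3)
     - (-1 + t - y)"

lemma riley_phi_eq_riley_phi_sq: "riley_phi x y = riley_phi_sq (x\<^sup>2) y"
  unfolding riley_phi_def lam_def alpha_def beta_def riley_phi_sq_def
  by (simp add: power_mult[symmetric])

lemma isCont_riley_phi_sq: "isCont (riley_phi_sq t) y"
  unfolding riley_phi_sq_def by (intro continuous_intros)

lemma riley_phi_sq_at_2: "riley_phi_sq t 2 = 2*t^2 - 12*t + 17"
  unfolding riley_phi_sq_def by algebra

lemma riley_phi_sq_at_4:
  "riley_phi_sq (4 - s) 4 = 113 + 360 * s + 436 * s^2 + 254 * s^3 + 72 * s^4 + 8 * s^5"
  unfolding riley_phi_sq_def by algebra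

lemma riley_phi_sq_at_5_div_2:
  "riley_phi_sq (4 - s) (5/2) =
     - (73/256 + 327/128 * s - 29/32 * s^2 - 35/16 * s^3 - 15/16 * s^4 - 1/8 * s^5)"
  unfolding riley_phi_sq_def by algebra

lemma riley_phi_sq_at_4_pos:
  assumes "t \<le> 4"
  shows "riley_phi_sq t 4 > 0"
proof -
  have "riley_phi_sq (4 - (4 - t)) 4 > 0"
    unfolding riley_phi_sq_at_4 using assms by (intro add_pos_nonneg) auto
  then show ?thesis by simp
qed

lemma riley_phi_sq_at_2_neg:
  assumes "64/25 \<le> t" "t \<le> 37/10"
  shows "riley_phi_sq t 2 < 0"
proof -
  have "(t - 64/25) * (37/10 - t) \<ge> 0"
    using assms by simp
  moreover have "(t - 64/25) * (37/10 - t) = 313/50 * t - 1184/125 - t^2"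
    by algebra
  ultimately show ?thesis
    unfolding riley_phi_sq_at_2 using assms by linarith
qed

lemma riley_phi_sq_at_5_div_2_neg:
  assumes "37/10 \<le> t" "t \<le> 4"
  shows "riley_phi_sq t (5/2) < 0"
proof -
  define s where "s = 4 - t"
  have s: "0 \<le> s" "s \<le> 3/10"
    using assms by (auto simp: s_def)
  have "s^k \<le> (3/10)^k" for k
    using s by (intro power_mono)
  from this[of 2] this[of 3] this[of 4] this[of 5] s
  have "riley_phi_sq (4 - s) (5/2) < 0"
    unfolding riley_phi_sq_at_5_div_2 by (simp add: power_divide)
  then show ?thesis
    by (simp add: s_def)
qed

lemma IVT_strict_root:
  fixes f :: "real \<Rightarrow> real"
  assumes "f a < 0" "f b > 0" "a \<le> b" "\<And>x. isCont f x"
  shows "\<exists>y. a < y \<and> y < b \<and> f y = 0"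
proof -
  obtain y where "a \<le> y" "y \<le> b" "f y = 0"
    using IVT[of f a 0 b] assms by fastforce
  moreover from assms \<open>f y = 0\<close> have "y \<noteq> a" "y \<noteq> b"
    by auto
  ultimately show ?thesis
    by force
qed

lemma riley_phi_sq_root_gt_2:
  assumes "64/25 \<le> t" "t \<le> 4"
  shows "\<exists>y > 2. riley_phi_sq t y = 0"
proof -
  obtain y\<^sub>0 where y\<^sub>0: "2 \<le> y\<^sub>0" "y\<^sub>0 \<le> 4" "riley_phi_sq t y\<^sub>0 < 0"
  proof (cases "t \<le> 37/10")
    case True
    with assms that[of 2] show ?thesis by (simp add: riley_phi_sq_at_2_neg)
  next
    case False
    with assms that[of "5/2"] show ?thesis by (simp add: riley_phi_sq_at_5_div_2_neg)
  qed
  moreover have "riley_phi_sq t 4 > 0"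
    using assms(2) by (rule riley_phi_sq_at_4_pos)
  ultimately obtain y where "y\<^sub>0 < y" "riley_phi_sq t y = 0"
    using IVT_strict_root[of "riley_phi_sq t"] isCont_riley_phi_sq by blast
  with y\<^sub>0 show ?thesis
    by (intro exI[of _ y]) simp
qed

lemma cos_ge_1_minus_sq_div_2: "cos (x::real) \<ge> 1 - x\<^sup>2 / 2"
proof -
  have "\<bar>sin (x / 2)\<bar> \<le> \<bar>x / 2\<bar>"
    by (rule abs_sin_x_le_abs_x)
  then have "(sin (x / 2))\<^sup>2 \<le> (x / 2)\<^sup>2"
    by (metis abs_le_square_iff)
  moreover have "cos x = 1 - 2 * (sin (x / 2))\<^sup>2"
    using cos_double_sin[of "x / 2"] by simp
  ultimately show ?thesis
    by (simp add: power_divide)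
qed

lemma cos_ge_4_div_5:
  assumes "\<bar>x\<bar> \<le> pi / 5"
  shows "cos x \<ge> 4/5"
proof -
  have "x\<^sup>2 \<le> (pi / 5)\<^sup>2"
    using assms abs_le_square_iff[of x "pi / 5"] by simp
  also have "\<dots> \<le> 2/5"
  proof -
    have "pi * pi \<le> 3.15 * 3.15"
      using pi_approx by (intro mult_mono) auto
    then show ?thesis
      by (simp add: power_divide power2_eq_square)
  qed
  finally show ?thesis
    using cos_ge_1_minus_sq_div_2[of x] by simp
qed

theorem proposition6p10:
  fixes n :: nat
  assumes "n \<ge> 5"
  shows "\<exists>y::real. y > 2 \<and> riley_phi (2 * cos (pi / real n)) y = 0"
proof -
  let ?c = "cos (pi / real n)"
  have "pi / real n \<le> pi / 5"
    using assms by (intro divide_left_mono) auto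
  then have "(8/5)\<^sup>2 \<le> (2 * ?c)\<^sup>2"
    using cos_ge_4_div_5[of "pi / real n"] by (intro power_mono) auto
  moreover have "(2 * ?c)\<^sup>2 \<le> 4"
    using abs_cos_le_one[of "pi / real n"] abs_square_le_1[of ?c]
    by (simp add: power_mult_distrib)
  ultimately have "\<exists>y > 2. riley_phi_sq ((2 * ?c)\<^sup>2) y = 0"
    by (intro riley_phi_sq_root_gt_2) (simp_all add: power_divide)
  then show ?thesis
    by (simp add: riley_phi_eq_riley_phi_sq)
qed

end
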